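(* Let $w=(w(m))_{m\in2\mathbb{Z}}\in\ell^2(2\mathbb{Z})$, set $V(m)=m\,w(m)$, and for $n\in\mathbb{N}$, $d\in\{n,-n\}$ and $p\in\mathbb{N}$ let $$L(p,d)=\sum_{i_1,\dots,i_p\neq\pm n}\frac{|V(d-i_1)|}{|n^2-i_1^2|}\cdot\frac{|V(i_1-i_2)|}{|n^2-i_2^2|}\cdots\frac{|V(i_{p-1}-i_p)|}{|n^2-i_p^2|},$$ where all summation indices $i_1,\dots,i_p$ range over $n+2\mathbb{Z}$ with $i_\nu\neq\pm n$. Then there exists a sequence of positive numbers $\varepsilon_n\to0$ such that, for all sufficiently large $n$, $$L(s,n)\le\varepsilon_n^s\quad\text{and}\quad L(s,-n)\le\varepsilon_n^s\qquad\forall s\in\mathbb{N}.$$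
   Context: In the application, $w(m)$ are the Fourier coefficients of a $\pi$-periodic $L^2$ function $Q$, $Q(x)=\sum_{m\in2\mathbb{Z}}w(m)e^{imx}$, so that $V(m)$ is (up to a factor $i$) the $m$-th Fourier coefficient of $Q'$; but the statement only uses $w\in\ell^2(2\mathbb{Z})$. *)

theory Defs
  imports "HOL-Analysis.Analysis"
begin

definition idx :: "nat \<Rightarrow> int set" where
  "idx n = {i. even (i - int n) \<and> i \<noteq> int n \<and> i \<noteq> - int n}"

definition absV :: "(int \<Rightarrow> complex) \<Rightarrow> int \<Rightarrow> real" where
  "absV w m = \<bar>real_of_int m\<bar> * cmod (w m)"

fun chain_term :: "(int \<Rightarrow> complex) \<Rightarrow> nat \<Rightarrow> int \<Rightarrow> int list \<Rightarrow> real" where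
  "chain_term w n prev [] = 1"
| "chain_term w n prev (i # is) =
     absV w (prev - i) / \<bar>real_of_int (int n ^ 2 - i ^ 2)\<bar> * chain_term w n i is"

definition L :: "(int \<Rightarrow> complex) \<Rightarrow> nat \<Rightarrow> nat \<Rightarrow> int \<Rightarrow> ennreal" where
  "L w n p d = (\<Sum>\<^sub>\<infinity> is \<in> {is. length is = p \<and> set is \<subseteq> idx n}.
                  ennreal (chain_term w n d is))"

end

theory Submission
  imports Defs "HOL-Real_Asymp.Real_Asymp"
begin

text \<open>
  Since \<open>|n\<^sup>2 - b\<^sup>2| = ||b| - n| (|b| + n)\<close>, moving the small factor \<open>||a| - n|\<close> of each
  denominator onto the preceding index turns \<open>a \<mapsto> L(p, a) / ||a| - n|\<close> into the \<open>p\<close>-th iterate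
  of the kernel \<open>M(a, b) = |V(a - b)| / (||a| - n| (|b| + n))\<close> applied to \<open>b \<mapsto> 1 / ||b| - n|\<close>,
  and \<open>L(p + 1, d)\<close> is one more step with the boundary kernel \<open>|V(d - b)| / (|b| + n)\<close>.
  By Cauchy-Schwarz, \<open>L(p + 1, d)\<^sup>2\<close> is at most the squared norm of the boundary row times the
  \<open>p\<close>-th power of the squared Hilbert-Schmidt norm of \<open>M\<close> times \<open>\<Sum>\<^sub>b 1 / ||b| - n|\<^sup>2\<close>; the last
  factor is at most twice the sum of \<open>1/k\<^sup>2\<close> over the nonzero integers, uniformly in \<open>n\<close>.
  Both the Hilbert-Schmidt norm and the boundary rows tend to \<open>0\<close>: the Fourier modes with
  \<open>|m| \<le> R\<close> contribute \<open>O(R\<^sup>2/n\<^sup>2)\<close> because \<open>|b| + n \<ge> n\<close>, and the remaining ones a constant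
  multiple of the \<open>\<ell>\<^sup>2\<close> tail of \<open>w\<close>.
\<close>

section \<open>Sums and limits in the extended nonnegative reals\<close>

text \<open>The library's \<open>summable_on_ennreal\<close> is only stated for functions factoring through
  \<open>ennreal_of_enat\<close>.\<close>

lemma ennreal_summable_on [simp]: "(f :: 'a \<Rightarrow> ennreal) summable_on A"
  by (simp add: nonneg_summable_on_complete)

lemma infsum_ennreal_eq_SUP:
  fixes f :: "'a \<Rightarrow> ennreal"
  shows "infsum f A = (SUP F\<in>{F. finite F \<and> F \<subseteq> A}. sum f F)"
  by (rule nonneg_infsum_complete) simp

lemma sum_le_infsum_ennreal:
  fixes f :: "'a \<Rightarrow> ennreal"
  assumes "finite F" "F \<subseteq> A"
  shows "sum f F \<le> infsum f A"
  unfolding infsum_ennreal_eq_SUP[of f A] using assms by (intro SUP_upper) auto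

lemma infsum_mono_set_ennreal:
  fixes f :: "'a \<Rightarrow> ennreal"
  assumes "A \<subseteq> B"
  shows "infsum f A \<le> infsum f B"
  using assms by (intro infsum_mono_neutral) auto

lemma infsum_cmult_right_ennreal:
  fixes f :: "'a \<Rightarrow> ennreal"
  shows "infsum (\<lambda>x. c * f x) A = c * infsum f A"
  unfolding infsum_ennreal_eq_SUP SUP_mult_left_ennreal sum_distrib_left ..

lemma infsum_cmult_left_ennreal:
  fixes f :: "'a \<Rightarrow> ennreal"
  shows "infsum (\<lambda>x. f x * c) A = infsum f A * c"
  using infsum_cmult_right_ennreal[of c f A] by (simp add: mult.commute)

lemma infsum_Un_le_ennreal:
  fixes f :: "'a \<Rightarrow> ennreal"
  shows "infsum f (A \<union> B) \<le> infsum f A + infsum f B"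
proof -
  have "infsum f (A \<union> B) = infsum f A + infsum f (B - A)"
    by (metis Un_Diff_cancel Diff_disjoint infsum_Un_disjoint ennreal_summable_on)
  also have "\<dots> \<le> infsum f A + infsum f B"
    by (intro add_left_mono infsum_mono_set_ennreal) auto
  finally show ?thesis .
qed

lemma infsum_reindex_le_ennreal:
  fixes g :: "'b \<Rightarrow> ennreal"
  assumes "inj_on h A" "h ` A \<subseteq> B"
  shows "infsum (\<lambda>a. g (h a)) A \<le> infsum g B"
  using infsum_reindex[OF assms(1), of g] infsum_mono_set_ennreal[OF assms(2), of g]
  by (simp add: o_def)

lemma infsum_ennreal_of_real:
  fixes f :: "'a \<Rightarrow> real"
  assumes "f summable_on A" "\<And>x. x \<in> A \<Longrightarrow> f x \<ge> 0"
  shows "infsum (\<lambda>x. ennreal (f x)) A = ennreal (infsum f A)"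
proof -
  have "sum (ennreal \<circ> f) F = ennreal (sum f F)" if "finite F" "F \<subseteq> A" for F
    using that assms(2) by (subst sum_ennreal[symmetric]) (auto simp: o_def)
  then have "ennreal (infsum f A) = infsum (ennreal \<circ> f) A"
    by (simp add: infsum_comm_additive_general assms(1))
  then show ?thesis by (simp add: o_def)
qed

lemma infsum_Sigma_finite_ennreal:
  fixes f :: "'a \<times> 'b \<Rightarrow> ennreal"
  assumes "finite G"
  shows "infsum f (Sigma G B) = (\<Sum>x\<in>G. infsum (\<lambda>y. f (x, y)) (B x))"
  using assms
proof (induction G rule: finite_induct)
  case (insert x G)
  have "Sigma (insert x G) B = Pair x ` B x \<union> Sigma G B"
    and "Pair x ` B x \<inter> Sigma G B = {}" using insert by auto
  then have "infsum f (Sigma (insert x G) B) = infsum f (Pair x ` B x) + infsum f (Sigma G B)"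
    by (simp add: infsum_Un_disjoint)
  also have "infsum f (Pair x ` B x) = infsum (\<lambda>y. f (x, y)) (B x)"
    by (subst infsum_reindex) (auto simp: inj_on_def o_def)
  finally show ?case using insert by simp
qed simp

lemma infsum_Sigma_ennreal:
  fixes f :: "'a \<times> 'b \<Rightarrow> ennreal"
  shows "infsum f (Sigma A B) = infsum (\<lambda>x. infsum (\<lambda>y. f (x, y)) (B x)) A"
proof (rule antisym)
  show "infsum f (Sigma A B) \<le> infsum (\<lambda>x. infsum (\<lambda>y. f (x, y)) (B x)) A"
    unfolding infsum_ennreal_eq_SUP[of f]
  proof (intro SUP_least, clarify)
    fix F assume F: "finite F" "F \<subseteq> Sigma A B"
    define H where "H x = {y. (x, y) \<in> F}" for x
    have F_eq: "F = Sigma (fst ` F) H" unfolding H_def by force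
    have "H x \<subseteq> snd ` F" for x unfolding H_def by force
    then have fin_H: "finite (H x)" for x using F(1) finite_subset by blast
    have "sum f F = (\<Sum>x\<in>fst ` F. \<Sum>y\<in>H x. f (x, y))"
      using F(1) fin_H by (subst F_eq, subst sum.Sigma) auto
    also have "\<dots> \<le> (\<Sum>x\<in>fst ` F. infsum (\<lambda>y. f (x, y)) (B x))"
      using F by (intro sum_mono sum_le_infsum_ennreal fin_H) (auto simp: H_def)
    also have "\<dots> \<le> infsum (\<lambda>x. infsum (\<lambda>y. f (x, y)) (B x)) A"
      using F by (intro sum_le_infsum_ennreal) auto
    finally show "sum f F \<le> infsum (\<lambda>x. infsum (\<lambda>y. f (x, y)) (B x)) A" .
  qed
  show "infsum (\<lambda>x. infsum (\<lambda>y. f (x, y)) (B x)) A \<le> infsum f (Sigma A B)"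
    unfolding infsum_ennreal_eq_SUP[of "\<lambda>x. infsum (\<lambda>y. f (x, y)) (B x)"]
    by (intro SUP_least, clarify, subst infsum_Sigma_finite_ennreal[symmetric])
      (auto intro: infsum_mono_set_ennreal)
qed

lemma infsum_swap_ennreal:
  fixes f :: "'a \<Rightarrow> 'b \<Rightarrow> ennreal"
  shows "infsum (\<lambda>x. infsum (f x) B) A = infsum (\<lambda>y. infsum (\<lambda>x. f x y) A) B"
proof -
  have "infsum (\<lambda>x. infsum (f x) B) A = infsum (\<lambda>(x, y). f x y) (A \<times> B)"
    using infsum_Sigma_ennreal[of "\<lambda>(x, y). f x y" A "\<lambda>_. B"] by simp
  also have "A \<times> B = prod.swap ` (B \<times> A)" by auto
  also have "infsum (\<lambda>(x, y). f x y) (prod.swap ` (B \<times> A)) = infsum (\<lambda>(y, x). f x y) (B \<times> A)"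
    by (subst infsum_reindex) (auto simp: o_def case_prod_beta split_beta')
  also have "\<dots> = infsum (\<lambda>y. infsum (\<lambda>x. f x y) A) B"
    using infsum_Sigma_ennreal[of "\<lambda>(y, x). f x y" B "\<lambda>_. A"] by simp
  finally show ?thesis .
qed

lemma Cauchy_Schwarz_infsum_ennreal:
  fixes f g :: "'a \<Rightarrow> ennreal"
  shows "(infsum (\<lambda>x. f x * g x) A)\<^sup>2 \<le> infsum (\<lambda>x. (f x)\<^sup>2) A * infsum (\<lambda>x. (g x)\<^sup>2) A"
proof -
  let ?S = "\<lambda>F. \<Sum>x\<in>F. f x * g x"
  let ?I = "{F. finite F \<and> F \<subseteq> A}"
  have "(infsum (\<lambda>x. f x * g x) A)\<^sup>2 = (SUP F\<in>?I. SUP G\<in>?I. ?S G * ?S F)"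
    unfolding infsum_ennreal_eq_SUP[of "\<lambda>x. f x * g x"] power2_eq_square
    by (simp only: SUP_mult_right_ennreal SUP_mult_left_ennreal)
  also have "\<dots> \<le> infsum (\<lambda>x. (f x)\<^sup>2) A * infsum (\<lambda>x. (g x)\<^sup>2) A"
  proof (intro SUP_least, clarify)
    fix F G assume F: "finite F" "F \<subseteq> A" and G: "finite G" "G \<subseteq> A"
    have "?S G * ?S F \<le> (?S (F \<union> G))\<^sup>2"
      unfolding power2_eq_square using F G by (intro mult_mono sum_mono2) auto
    also have "\<dots> \<le> (\<Sum>x\<in>F \<union> G. (f x)\<^sup>2) * (\<Sum>x\<in>F \<union> G. (g x)\<^sup>2)"
      using Cauchy_Schwarz_nn_integral[of f "count_space (F \<union> G)" g] F G
      by (simp add: nn_integral_count_space_finite)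
    also have "\<dots> \<le> infsum (\<lambda>x. (f x)\<^sup>2) A * infsum (\<lambda>x. (g x)\<^sup>2) A"
      using F G by (intro mult_mono sum_le_infsum_ennreal) auto
    finally show "?S G * ?S F \<le> infsum (\<lambda>x. (f x)\<^sup>2) A * infsum (\<lambda>x. (g x)\<^sup>2) A" .
  qed
  finally show ?thesis .
qed

lemma infsum_lists_Suc_ennreal:
  fixes f :: "'a list \<Rightarrow> ennreal"
  shows "infsum f {xs. length xs = Suc p \<and> set xs \<subseteq> A}
       = infsum (\<lambda>x. infsum (\<lambda>xs. f (x # xs)) {xs. length xs = p \<and> set xs \<subseteq> A}) A"
proof -
  let ?Ls = "\<lambda>p. {xs. length xs = p \<and> set xs \<subseteq> A}"
  let ?Cons = "\<lambda>(x, xs). x # xs"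
  have "?Ls (Suc p) = ?Cons ` (A \<times> ?Ls p)"
    by (auto simp: image_iff length_Suc_conv)
  moreover have "inj_on ?Cons (A \<times> ?Ls p)"
    by (auto simp: inj_on_def)
  ultimately have "infsum f (?Ls (Suc p)) = infsum (f \<circ> ?Cons) (A \<times> ?Ls p)"
    by (simp only: infsum_reindex)
  also have "f \<circ> ?Cons = (\<lambda>(x, xs). f (x # xs))"
    by (auto simp: fun_eq_iff)
  finally show ?thesis
    using infsum_Sigma_ennreal[of "\<lambda>(x, xs). f (x # xs)" A "\<lambda>_. ?Ls p"] by simp
qed

lemma summable_on_remainder_small:
  fixes f :: "'a \<Rightarrow> real"
  assumes f: "f summable_on S" and e: "e > 0"
  obtains F where "finite F" "F \<subseteq> S" "infsum f (S - F) \<le> e"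
proof -
  obtain F where F: "finite F" "F \<subseteq> S" "dist (sum f F) (infsum f S) \<le> e"
    using infsum_finite_approximation[OF f e] by blast
  have "infsum f (S - F) = infsum f S - sum f F"
    using infsum_Diff[OF f _ F(2)] F(1) by simp
  also have "\<dots> \<le> e" using F(3) by (simp add: dist_real_def)
  finally show ?thesis using that F(1,2) by blast
qed

lemma ennreal_le_of_power2_le:
  fixes x :: ennreal and a :: real
  assumes "0 \<le> a" "x\<^sup>2 \<le> ennreal (a\<^sup>2)"
  shows "x \<le> ennreal a"
proof (cases x)
  case (real t)
  then have "t\<^sup>2 \<le> a\<^sup>2" using assms by (simp add: ennreal_power ennreal_le_iff)
  then have "t \<le> a" using assms(1) by (rule power2_le_imp_le)
  then show ?thesis using real by (simp add: ennreal_leI)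
next
  case top
  then show ?thesis using assms by simp (metis ennreal_neq_top top_unique)
qed

lemma ennreal_tendsto_0I:
  fixes Q :: "nat \<Rightarrow> ennreal"
  assumes "\<And>e. e > 0 \<Longrightarrow> eventually (\<lambda>n. Q n \<le> ennreal e) sequentially"
  shows "Q \<longlonglongrightarrow> 0"
proof (rule order_tendstoI)
  fix y :: ennreal assume y: "0 < y"
  obtain e where e: "e > 0" "ennreal e < y"
  proof (cases y)
    case (real r)
    then show ?thesis using that[of "r / 2"] y by (simp add: ennreal_lessI)
  qed (use that[of 1] in simp)
  show "eventually (\<lambda>n. Q n < y) sequentially"
    using assms[OF e(1)] by eventually_elim (use e in auto)
qed simp

lemma ennreal_tendsto_0_by_truncation:
  fixes Q T :: "nat \<Rightarrow> ennreal"
  assumes A: "A < \<infinity>" and B: "B < \<infinity>" and T: "\<And>e. e > 0 \<Longrightarrow> \<exists>R. T R \<le> ennreal e"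
    and Q: "\<And>R n. n \<ge> 1 \<Longrightarrow> Q n \<le> ennreal (real R ^ 2 / real n ^ 2) * B + A * T R"
  shows "Q \<longlonglongrightarrow> 0"
proof (rule ennreal_tendsto_0I)
  fix e :: real assume e: "e > 0"
  obtain a where a: "A = ennreal a" "a \<ge> 0" using A by (cases A) auto
  obtain b where b: "B = ennreal b" "b \<ge> 0" using B by (cases B) auto
  obtain R where R: "T R \<le> ennreal (e / (2 * (a + 1)))"
    using T[of "e / (2 * (a + 1))"] e a by auto
  have "A * T R \<le> ennreal a * ennreal (e / (2 * (a + 1)))"
    unfolding a(1) by (rule mult_left_mono[OF R]) simp
  also have "\<dots> = ennreal (a * (e / (2 * (a + 1))))"
    by (rule ennreal_mult[symmetric]) (use a e in auto)
  also have "a * (e / (2 * (a + 1))) \<le> e / 2"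
    using a e by (simp add: field_simps)
  finally have AT: "A * T R \<le> ennreal (e / 2)" by (simp add: ennreal_leI order_trans)
  have "(\<lambda>n. real R ^ 2 * b / real n ^ 2) \<longlonglongrightarrow> 0" by real_asymp
  then have "eventually (\<lambda>n. real R ^ 2 * b / real n ^ 2 < e / 2) sequentially"
    using e by (intro order_tendstoD(2)) auto
  then show "eventually (\<lambda>n. Q n \<le> ennreal e) sequentially"
    using eventually_ge_at_top[of 1]
  proof eventually_elim
    case (elim n)
    have "ennreal (real R ^ 2 / real n ^ 2) * B \<le> ennreal (e / 2)"
      using elim b by (simp add: ennreal_mult[symmetric] ennreal_leI del: ennreal_mult)
    then have "Q n \<le> ennreal (e / 2) + ennreal (e / 2)"
      using Q[OF elim(2), of R] AT by (meson add_mono order_trans)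
    also have "\<dots> = ennreal e" using e by (simp flip: ennreal_plus)
    finally show ?case .
  qed
qed

lemma ennreal_tendsto_0_obtains_real_majorant:
  fixes \<eta> :: "nat \<Rightarrow> ennreal"
  assumes "\<eta> \<longlonglongrightarrow> 0"
  obtains \<delta> :: "nat \<Rightarrow> real"
  where "\<And>n. \<delta> n > 0" "\<delta> \<longlonglongrightarrow> 0" "\<forall>\<^sub>F n in sequentially. \<eta> n \<le> ennreal (\<delta> n)"
proof
  let ?\<delta> = "\<lambda>n. enn2real (\<eta> n) + inverse (real (Suc n))"
  show "?\<delta> n > 0" for n by (intro add_nonneg_pos) auto
  show "?\<delta> \<longlonglongrightarrow> 0"
    using tendsto_add[OF tendsto_enn2real[of \<eta> 0] LIMSEQ_inverse_real_of_nat] assms by simp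
  have "\<forall>\<^sub>F n in sequentially. \<eta> n < top"
    using order_tendstoD(2)[OF assms, of top] by simp
  then show "\<forall>\<^sub>F n in sequentially. \<eta> n \<le> ennreal (?\<delta> n)"
    by eventually_elim (auto simp: ennreal_enn2real_if ennreal_leI)
qed

section \<open>Iterated kernels\<close>

definition kernel_apply :: "('a \<Rightarrow> 'a \<Rightarrow> ennreal) \<Rightarrow> 'a set \<Rightarrow> ('a \<Rightarrow> ennreal) \<Rightarrow> 'a \<Rightarrow> ennreal"
  where "kernel_apply K A f a = (\<Sum>\<^sub>\<infinity>b\<in>A. K a b * f b)"

lemma kernel_apply_iterate_Suc:
  "(kernel_apply K A ^^ Suc p) f a = (\<Sum>\<^sub>\<infinity>b\<in>A. K a b * (kernel_apply K A ^^ p) f b)"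
  unfolding funpow.simps(2) o_apply by (rule kernel_apply_def)

definition sq_norm :: "'a set \<Rightarrow> ('a \<Rightarrow> ennreal) \<Rightarrow> ennreal"
  where "sq_norm A f = (\<Sum>\<^sub>\<infinity>a\<in>A. (f a)\<^sup>2)"

definition hilbert_schmidt_sq :: "('a \<Rightarrow> 'a \<Rightarrow> ennreal) \<Rightarrow> 'a set \<Rightarrow> ennreal"
  where "hilbert_schmidt_sq K A = (\<Sum>\<^sub>\<infinity>a\<in>A. sq_norm A (K a))"

lemma sq_kernel_apply_le: "(kernel_apply K A f a)\<^sup>2 \<le> sq_norm A (K a) * sq_norm A f"
  unfolding kernel_apply_def sq_norm_def by (rule Cauchy_Schwarz_infsum_ennreal)

lemma sq_norm_kernel_apply_le:
  "sq_norm A (kernel_apply K A f) \<le> hilbert_schmidt_sq K A * sq_norm A f"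
proof -
  have "sq_norm A (kernel_apply K A f) \<le> (\<Sum>\<^sub>\<infinity>a\<in>A. sq_norm A (K a) * sq_norm A f)"
    unfolding sq_norm_def[of A "kernel_apply K A f"]
    by (intro infsum_mono sq_kernel_apply_le) auto
  then show ?thesis by (simp add: hilbert_schmidt_sq_def infsum_cmult_left_ennreal)
qed

lemma sq_norm_kernel_iterate_le:
  "sq_norm A ((kernel_apply K A ^^ p) f) \<le> hilbert_schmidt_sq K A ^ p * sq_norm A f"
proof (induction p)
  case (Suc p)
  have "sq_norm A ((kernel_apply K A ^^ Suc p) f)
        \<le> hilbert_schmidt_sq K A * sq_norm A ((kernel_apply K A ^^ p) f)"
    by (simp add: sq_norm_kernel_apply_le)
  also have "\<dots> \<le> hilbert_schmidt_sq K A * (hilbert_schmidt_sq K A ^ p * sq_norm A f)"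
    using Suc by (rule mult_left_mono) simp
  finally show ?case by (simp only: power_Suc mult.assoc)
qed simp

section \<open>Chain sums as kernel iterates\<close>

lemma absV_nonneg: "absV w m \<ge> 0"
  by (simp add: absV_def)

lemma chain_term_nonneg: "chain_term w n a is \<ge> 0"
  by (induction "is" arbitrary: a) (auto simp: absV_nonneg)

lemma L_Suc:
  "L w n (Suc p) a
   = (\<Sum>\<^sub>\<infinity>b\<in>idx n. ennreal (absV w (a - b) / \<bar>real_of_int (int n ^ 2 - b ^ 2)\<bar>) * L w n p b)"
proof -
  have "ennreal (chain_term w n a (b # is))
        = ennreal (absV w (a - b) / \<bar>real_of_int (int n ^ 2 - b ^ 2)\<bar>) * ennreal (chain_term w n b is)"
    for b "is"
    by (simp only: chain_term.simps ennreal_mult divide_nonneg_nonneg absV_nonneg abs_ge_zero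
        chain_term_nonneg)
  then show ?thesis
    unfolding L_def infsum_lists_Suc_ennreal by (simp add: infsum_cmult_right_ennreal)
qed

definition near_factor :: "nat \<Rightarrow> int \<Rightarrow> real"
  where "near_factor n b = \<bar>real_of_int (\<bar>b\<bar> - int n)\<bar>"

definition far_factor :: "nat \<Rightarrow> int \<Rightarrow> real"
  where "far_factor n b = real_of_int \<bar>b\<bar> + real n"

lemma abs_square_diff_eq: "\<bar>real_of_int (int n ^ 2 - b ^ 2)\<bar> = near_factor n b * far_factor n b"
proof -
  have "int n ^ 2 - b ^ 2 = (int n - \<bar>b\<bar>) * (int n + \<bar>b\<bar>)"
    by (simp add: algebra_simps power2_eq_square flip: power2_abs)
  then have "\<bar>int n ^ 2 - b ^ 2\<bar> = \<bar>\<bar>b\<bar> - int n\<bar> * (\<bar>b\<bar> + int n)"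
    by (simp add: abs_mult abs_minus_commute add.commute)
  then have "real_of_int \<bar>int n ^ 2 - b ^ 2\<bar> = real_of_int (\<bar>\<bar>b\<bar> - int n\<bar> * (\<bar>b\<bar> + int n))"
    by simp
  then show ?thesis unfolding near_factor_def far_factor_def by simp
qed

definition chain_kernel :: "(int \<Rightarrow> complex) \<Rightarrow> nat \<Rightarrow> int \<Rightarrow> int \<Rightarrow> ennreal"
  where "chain_kernel w n a b = ennreal (absV w (a - b) / (near_factor n a * far_factor n b))"

definition boundary_kernel :: "(int \<Rightarrow> complex) \<Rightarrow> nat \<Rightarrow> int \<Rightarrow> int \<Rightarrow> ennreal"
  where "boundary_kernel w n d b = ennreal (absV w (d - b) / far_factor n b)"

definition inverse_near_factor :: "nat \<Rightarrow> int \<Rightarrow> ennreal"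
  where "inverse_near_factor n b = ennreal (1 / near_factor n b)"

lemma near_factor_nonneg: "near_factor n b \<ge> 0"
  by (simp add: near_factor_def)

lemma far_factor_nonneg: "far_factor n b \<ge> 0"
  by (simp add: far_factor_def)

lemma L_eq_kernel_iterate:
  "inverse_near_factor n a * L w n p a
   = (kernel_apply (chain_kernel w n) (idx n) ^^ p) (inverse_near_factor n) a"
proof (induction p arbitrary: a)
  case 0
  have "{is. length is = 0 \<and> set is \<subseteq> idx n} = {[]}" by auto
  then show ?case by (simp add: L_def)
next
  case (Suc p)
  have factor: "ennreal (1 / near_factor n a) * ennreal (absV w (a - b) / \<bar>real_of_int (int n ^ 2 - b ^ 2)\<bar>)
      = chain_kernel w n a b * ennreal (1 / near_factor n b)" for b
  proof -
    have "1 / near_factor n a * (absV w (a - b) / \<bar>real_of_int (int n ^ 2 - b ^ 2)\<bar>)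
          = absV w (a - b) / (near_factor n a * far_factor n b) * (1 / near_factor n b)"
      unfolding abs_square_diff_eq by simp
    then show ?thesis
      unfolding chain_kernel_def
      by (simp only: ennreal_mult[symmetric] divide_nonneg_nonneg mult_nonneg_nonneg zero_le_one
          near_factor_nonneg far_factor_nonneg absV_nonneg abs_ge_zero)
  qed
  have "inverse_near_factor n a * L w n (Suc p) a
        = (\<Sum>\<^sub>\<infinity>b\<in>idx n. chain_kernel w n a b * (inverse_near_factor n b * L w n p b))"
    unfolding L_Suc inverse_near_factor_def infsum_cmult_right_ennreal[symmetric]
    by (simp only: mult.assoc[symmetric] factor)
  also have "\<dots> = (kernel_apply (chain_kernel w n) (idx n) ^^ Suc p) (inverse_near_factor n) a"
    by (simp only: Suc kernel_apply_iterate_Suc)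
  finally show ?case .
qed

lemma sq_L_Suc_le:
  "(L w n (Suc p) d)\<^sup>2 \<le> sq_norm (idx n) (boundary_kernel w n d)
     * hilbert_schmidt_sq (chain_kernel w n) (idx n) ^ p * sq_norm (idx n) (inverse_near_factor n)"
proof -
  let ?K = "kernel_apply (chain_kernel w n) (idx n)"
  have "ennreal (absV w (d - b) / \<bar>real_of_int (int n ^ 2 - b ^ 2)\<bar>)
        = boundary_kernel w n d b * inverse_near_factor n b" for b
    unfolding boundary_kernel_def inverse_near_factor_def abs_square_diff_eq
    by (simp add: near_factor_nonneg far_factor_nonneg absV_nonneg flip: ennreal_mult)
  then have "L w n (Suc p) d = kernel_apply (boundary_kernel w n) (idx n) ((?K ^^ p) (inverse_near_factor n)) d"
    unfolding L_Suc kernel_apply_def[of "boundary_kernel w n"]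
    by (simp add: mult.assoc L_eq_kernel_iterate)
  then have "(L w n (Suc p) d)\<^sup>2 \<le> sq_norm (idx n) (boundary_kernel w n d) * sq_norm (idx n) ((?K ^^ p) (inverse_near_factor n))"
    by (simp only: sq_kernel_apply_le)
  also have "\<dots> \<le> sq_norm (idx n) (boundary_kernel w n d)
     * (hilbert_schmidt_sq (chain_kernel w n) (idx n) ^ p * sq_norm (idx n) (inverse_near_factor n))"
    by (intro mult_left_mono sq_norm_kernel_iterate_le) simp
  finally show ?thesis by (simp only: mult.assoc)
qed

lemma L_le_power:
  assumes "s \<ge> 1" "e \<ge> 0" "C \<ge> 1"
    and "sq_norm (idx n) (boundary_kernel w n d) \<le> ennreal e"
    and "hilbert_schmidt_sq (chain_kernel w n) (idx n) \<le> ennreal e"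
    and "sq_norm (idx n) (inverse_near_factor n) \<le> ennreal C"
  shows "L w n s d \<le> ennreal (sqrt (C * e) ^ s)"
proof -
  obtain p where s: "s = Suc p" using assms(1) by (cases s) auto
  have "L w n (Suc p) d \<le> ennreal (sqrt (C * e) ^ Suc p)"
  proof (rule ennreal_le_of_power2_le)
  show "0 \<le> sqrt (C * e) ^ Suc p" using assms(2,3) by simp
  have "(L w n (Suc p) d)\<^sup>2 \<le> ennreal e * ennreal e ^ p * ennreal C"
    using sq_L_Suc_le[of w n p d] assms(4-6)
    by (meson mult_mono power_mono zero_le order_trans)
  also have "\<dots> = ennreal (e ^ Suc p * C)"
    using assms(2,3) by (simp add: ennreal_power ennreal_mult mult.assoc)
  also have "e ^ Suc p * C \<le> e ^ Suc p * C ^ Suc p"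
    using assms(2,3) power_increasing[of 1 "Suc p" C] by (intro mult_left_mono) auto
  also have "\<dots> = (C * e) ^ Suc p"
    by (simp only: power_mult_distrib mult.commute)
  also have "(C * e) ^ Suc p = (sqrt (C * e) ^ 2) ^ Suc p"
    using assms(2,3) by simp
  also have "\<dots> = (sqrt (C * e) ^ Suc p)\<^sup>2"
    by (metis power_mult mult.commute)
  finally show "(L w n (Suc p) d)\<^sup>2 \<le> ennreal ((sqrt (C * e) ^ Suc p)\<^sup>2)"
    by (simp add: ennreal_leI order_trans)
  qed
  then show ?thesis unfolding s .
qed

section \<open>Estimates of the kernels\<close>

text \<open>The term \<open>k = 0\<close> vanishes since \<open>1 / 0 = 0\<close>.\<close>

definition inverse_squares_sum :: ennreal
  where "inverse_squares_sum = (\<Sum>\<^sub>\<infinity>k::int. ennreal (1 / (real_of_int k)\<^sup>2))"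

lemma inverse_squares_sum_finite: "inverse_squares_sum < \<infinity>"
proof -
  let ?g = "\<lambda>k::int. ennreal (1 / (real_of_int k)\<^sup>2)"
  have "(\<lambda>j::nat. 1 / (real j)\<^sup>2) summable_on UNIV"
    using inverse_power_summable[of 2, where 'a=real]
    by (subst summable_on_UNIV_nonneg_real_iff) (auto simp: divide_inverse)
  then have nat_sum: "(\<Sum>\<^sub>\<infinity>j::nat. ennreal (1 / (real j)\<^sup>2)) < \<infinity>"
    by (subst infsum_ennreal_of_real) auto
  have "(UNIV :: int set) = range int \<union> range (\<lambda>j. - int j)"
    by (auto intro: int_cases2)
  then have "inverse_squares_sum \<le> infsum ?g (range int) + infsum ?g (range (\<lambda>j. - int j))"
    unfolding inverse_squares_sum_def by (metis infsum_Un_le_ennreal)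
  also have "infsum ?g (range int) = (\<Sum>\<^sub>\<infinity>j::nat. ennreal (1 / (real j)\<^sup>2))"
    by (subst infsum_reindex) (auto simp: o_def)
  also have "infsum ?g (range (\<lambda>j. - int j)) = (\<Sum>\<^sub>\<infinity>j::nat. ennreal (1 / (real j)\<^sup>2))"
    by (subst infsum_reindex) (auto simp: o_def inj_on_def)
  finally show ?thesis using nat_sum by (simp add: ennreal_add_less_top order.strict_trans1)
qed

lemma infsum_inverse_squares_shift_le:
  "(\<Sum>\<^sub>\<infinity>a\<in>A. ennreal (1 / (real_of_int (a + c))\<^sup>2)) \<le> inverse_squares_sum"
  unfolding inverse_squares_sum_def
  by (rule infsum_reindex_le_ennreal[of "\<lambda>a. a + c"]) (auto simp: inj_on_def)

lemma sq_norm_inverse_near_factor_eq: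
  "sq_norm A (inverse_near_factor n) = (\<Sum>\<^sub>\<infinity>a\<in>A. ennreal (1 / near_factor n a ^ 2))"
  unfolding sq_norm_def inverse_near_factor_def
  by (simp add: ennreal_power near_factor_nonneg power_one_over)

lemma sq_norm_inverse_near_factor_le:
  "sq_norm (idx n) (inverse_near_factor n) \<le> 2 * inverse_squares_sum"
proof -
  let ?g = "\<lambda>k::int. ennreal (1 / (real_of_int k)\<^sup>2)"
  have "ennreal (1 / near_factor n a ^ 2) \<le> ?g (a - int n) + ?g (a + int n)" for a
  proof -
    have "near_factor n a = \<bar>real_of_int (a - int n)\<bar> \<or> near_factor n a = \<bar>real_of_int (a + int n)\<bar>"
      unfolding near_factor_def by (cases "a \<ge> 0") (auto simp: abs_minus_commute)
    then have "1 / near_factor n a ^ 2 \<le> 1 / (real_of_int (a - int n))\<^sup>2 + 1 / (real_of_int (a + int n))\<^sup>2"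
      by auto
    then show ?thesis by (simp add: ennreal_plus[symmetric] del: ennreal_plus)
  qed
  then have "sq_norm (idx n) (inverse_near_factor n)
      \<le> (\<Sum>\<^sub>\<infinity>a\<in>idx n. ?g (a + - int n)) + (\<Sum>\<^sub>\<infinity>a\<in>idx n. ?g (a + int n))"
    unfolding sq_norm_inverse_near_factor_eq infsum_add[OF ennreal_summable_on ennreal_summable_on, symmetric]
    by (intro infsum_mono) auto
  also have "\<dots> \<le> inverse_squares_sum + inverse_squares_sum"
    by (intro add_mono infsum_inverse_squares_shift_le)
  finally show ?thesis by (simp add: mult_2)
qed

lemma infsum_inverse_far_factor_le:
  "(\<Sum>\<^sub>\<infinity>b\<in>idx n. ennreal (1 / far_factor n b ^ 2)) \<le> inverse_squares_sum"
proof -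
  have "ennreal (1 / far_factor n b ^ 2) \<le> ennreal (1 / (real_of_int (b + - int n))\<^sup>2)"
    if "b \<in> idx n" for b
  proof (intro ennreal_leI)
    have "b \<noteq> int n" using that by (auto simp: idx_def)
    then have pos: "0 < \<bar>real_of_int (b + - int n)\<bar>" by simp
    have "\<bar>real_of_int (b + - int n)\<bar> \<le> far_factor n b" unfolding far_factor_def by simp
    then have "\<bar>real_of_int (b + - int n)\<bar>\<^sup>2 \<le> (far_factor n b)\<^sup>2"
      using pos by (intro power_mono) auto
    then show "1 / far_factor n b ^ 2 \<le> 1 / (real_of_int (b + - int n))\<^sup>2"
      using pos by (intro frac_le) auto
  qed
  then have "(\<Sum>\<^sub>\<infinity>b\<in>idx n. ennreal (1 / far_factor n b ^ 2))
      \<le> (\<Sum>\<^sub>\<infinity>b\<in>idx n. ennreal (1 / (real_of_int (b + - int n))\<^sup>2))"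
    by (intro infsum_mono) auto
  also have "\<dots> \<le> inverse_squares_sum" by (rule infsum_inverse_squares_shift_le)
  finally show ?thesis .
qed

lemma power2_abs_mult_divide_le:
  fixes x c t \<nu> R :: real
  assumes "0 < \<nu>" "\<nu> \<le> t" "\<bar>x\<bar> \<le> R"
  shows "(\<bar>x\<bar> * c / t)\<^sup>2 \<le> R\<^sup>2 / \<nu>\<^sup>2 * c\<^sup>2"
proof -
  have "x\<^sup>2 \<le> R\<^sup>2" using assms(3) by (metis abs_ge_zero abs_le_square_iff abs_of_nonneg order_trans)
  moreover have "\<nu>\<^sup>2 \<le> t\<^sup>2" using assms by (intro power_mono) auto
  ultimately have "x\<^sup>2 / t\<^sup>2 \<le> R\<^sup>2 / \<nu>\<^sup>2"
    using assms by (intro frac_le) auto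
  then have "x\<^sup>2 / t\<^sup>2 * c\<^sup>2 \<le> R\<^sup>2 / \<nu>\<^sup>2 * c\<^sup>2" by (intro mult_right_mono) auto
  then show ?thesis by (simp add: power_divide power_mult_distrib)
qed

lemma power2_abs_mult_divide_le_self:
  fixes x c t :: real
  assumes "0 < t" "\<bar>x\<bar> \<le> t"
  shows "(\<bar>x\<bar> * c / t)\<^sup>2 \<le> c\<^sup>2"
proof -
  have "x\<^sup>2 \<le> t\<^sup>2" using assms by (metis abs_le_square_iff abs_of_pos)
  then have "x\<^sup>2 / t\<^sup>2 * c\<^sup>2 \<le> 1 * c\<^sup>2" using assms by (intro mult_right_mono) auto
  then show ?thesis by (simp add: power_divide power_mult_distrib)
qed

lemma power2_abs_mult_divide_mult_le:
  fixes x c s t :: real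
  assumes "0 < s" "0 < t" "\<bar>x\<bar> \<le> s + t"
  shows "(\<bar>x\<bar> * c / (s * t))\<^sup>2 \<le> 2 * (1 / t\<^sup>2 * c\<^sup>2) + 2 * (1 / s\<^sup>2 * c\<^sup>2)"
proof -
  have "x\<^sup>2 \<le> (s + t)\<^sup>2" using assms by (metis abs_le_square_iff abs_of_pos add_pos_pos)
  also have "\<dots> \<le> 2 * s\<^sup>2 + 2 * t\<^sup>2"
    using zero_le_power2[of "s - t"] by (simp add: power2_eq_square algebra_simps)
  finally have "x\<^sup>2 / (s * t)\<^sup>2 \<le> (2 * s\<^sup>2 + 2 * t\<^sup>2) / (s * t)\<^sup>2"
    using assms by (intro divide_right_mono) auto
  also have "\<dots> = 2 / t\<^sup>2 + 2 / s\<^sup>2" using assms by (simp add: field_simps power2_eq_square)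
  finally have "x\<^sup>2 / (s * t)\<^sup>2 * c\<^sup>2 \<le> (2 / t\<^sup>2 + 2 / s\<^sup>2) * c\<^sup>2" by (intro mult_right_mono) auto
  then show ?thesis by (simp add: power_divide power_mult_distrib algebra_simps)
qed

definition sq_mod :: "(int \<Rightarrow> complex) \<Rightarrow> int \<Rightarrow> ennreal"
  where "sq_mod w m = ennreal ((cmod (w m))\<^sup>2)"

definition sq_mod_tail :: "(int \<Rightarrow> complex) \<Rightarrow> nat \<Rightarrow> int \<Rightarrow> ennreal"
  where "sq_mod_tail w R m = (if int R < \<bar>m\<bar> then sq_mod w m else 0)"

definition energy :: "(int \<Rightarrow> complex) \<Rightarrow> ennreal"
  where "energy w = (\<Sum>\<^sub>\<infinity>m\<in>{m. even m}. sq_mod w m)"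

definition tail_energy :: "(int \<Rightarrow> complex) \<Rightarrow> nat \<Rightarrow> ennreal"
  where "tail_energy w R = (\<Sum>\<^sub>\<infinity>m\<in>{m. even m}. sq_mod_tail w R m)"

lemma sq_boundary_kernel_le:
  assumes n: "n \<ge> 1" and b: "b \<in> idx n" and d: "d = int n \<or> d = - int n"
  shows "(boundary_kernel w n d b)\<^sup>2 \<le> ennreal (real R ^ 2 / real n ^ 2) * sq_mod w (d - b) + sq_mod_tail w R (d - b)"
proof -
  let ?x = "real_of_int (d - b)" and ?c = "cmod (w (d - b))"
  have "\<bar>d - b\<bar> \<le> \<bar>b\<bar> + int n" using d by auto
  then have x_le: "\<bar>?x\<bar> \<le> far_factor n b" unfolding far_factor_def by linarith
  have "0 < far_factor n b" using b by (auto simp: far_factor_def idx_def)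
  have kernel: "(boundary_kernel w n d b)\<^sup>2 = ennreal ((\<bar>?x\<bar> * ?c / far_factor n b)\<^sup>2)"
    by (simp add: boundary_kernel_def absV_def ennreal_power far_factor_nonneg)
  show ?thesis
  proof (cases "\<bar>d - b\<bar> \<le> int R")
    case True
    then have "\<bar>?x\<bar> \<le> real R" by linarith
    then have "(\<bar>?x\<bar> * ?c / far_factor n b)\<^sup>2 \<le> (real R)\<^sup>2 / (real n)\<^sup>2 * ?c\<^sup>2"
      using n by (intro power2_abs_mult_divide_le) (auto simp: far_factor_def)
    then have "(boundary_kernel w n d b)\<^sup>2 \<le> ennreal (real R ^ 2 / real n ^ 2) * sq_mod w (d - b)"
      unfolding kernel sq_mod_def by (simp add: ennreal_mult[symmetric] ennreal_leI del: ennreal_mult)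
    then show ?thesis by (simp add: add_increasing2)
  next
    case False
    then have "sq_mod_tail w R (d - b) = sq_mod w (d - b)" by (simp add: sq_mod_tail_def)
    moreover have "(\<bar>?x\<bar> * ?c / far_factor n b)\<^sup>2 \<le> ?c\<^sup>2"
      using \<open>0 < far_factor n b\<close> x_le by (rule power2_abs_mult_divide_le_self)
    ultimately show ?thesis unfolding kernel sq_mod_def by (simp add: add_increasing ennreal_leI)
  qed
qed

lemma sq_chain_kernel_le:
  assumes n: "n \<ge> 1" and a: "a \<in> idx n" and b: "b \<in> idx n"
  shows "(chain_kernel w n a b)\<^sup>2
         \<le> ennreal (real R ^ 2 / real n ^ 2) * (ennreal (1 / near_factor n a ^ 2) * sq_mod w (a - b))
            + 2 * (ennreal (1 / far_factor n b ^ 2) * sq_mod_tail w R (a - b))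
            + 2 * (ennreal (1 / near_factor n a ^ 2) * sq_mod_tail w R (a - b))"
proof -
  let ?x = "real_of_int (a - b)" and ?c = "cmod (w (a - b))"
  let ?s = "near_factor n a" and ?t = "far_factor n b"
  have s_pos: "0 < ?s" using a by (auto simp: near_factor_def idx_def)
  have t_pos: "0 < ?t" using b by (auto simp: far_factor_def idx_def)
  have "\<bar>a - b\<bar> \<le> \<bar>\<bar>a\<bar> - int n\<bar> + (\<bar>b\<bar> + int n)" by arith
  then have x_le: "\<bar>?x\<bar> \<le> ?s + ?t" unfolding near_factor_def far_factor_def by linarith
  have kernel: "(chain_kernel w n a b)\<^sup>2 = ennreal ((\<bar>?x\<bar> * ?c / (?s * ?t))\<^sup>2)"
    by (simp add: chain_kernel_def absV_def ennreal_power near_factor_nonneg far_factor_nonneg)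
  show ?thesis
  proof (cases "\<bar>a - b\<bar> \<le> int R")
    case True
    then have "\<bar>?x\<bar> \<le> real R" by linarith
    then have "(\<bar>?x\<bar> * (?c / ?s) / ?t)\<^sup>2 \<le> (real R)\<^sup>2 / (real n)\<^sup>2 * (?c / ?s)\<^sup>2"
      using n by (intro power2_abs_mult_divide_le) (auto simp: far_factor_def)
    then have "(\<bar>?x\<bar> * ?c / (?s * ?t))\<^sup>2 \<le> (real R)\<^sup>2 / (real n)\<^sup>2 * (1 / ?s ^ 2 * ?c\<^sup>2)"
      by (simp add: power_divide field_simps)
    then have "(chain_kernel w n a b)\<^sup>2
        \<le> ennreal (real R ^ 2 / real n ^ 2) * (ennreal (1 / ?s ^ 2) * sq_mod w (a - b))"
      unfolding kernel sq_mod_def by (simp add: ennreal_mult[symmetric] ennreal_leI del: ennreal_mult)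
    then show ?thesis by (simp add: add_increasing2)
  next
    case False
    then have tail: "sq_mod_tail w R (a - b) = sq_mod w (a - b)" by (simp add: sq_mod_tail_def)
    have "(\<bar>?x\<bar> * ?c / (?s * ?t))\<^sup>2 \<le> 2 * (1 / ?t ^ 2 * ?c\<^sup>2) + 2 * (1 / ?s ^ 2 * ?c\<^sup>2)"
      using s_pos t_pos x_le by (rule power2_abs_mult_divide_mult_le)
    then have "(chain_kernel w n a b)\<^sup>2 \<le> ennreal (2 * (1 / ?t ^ 2 * ?c\<^sup>2) + 2 * (1 / ?s ^ 2 * ?c\<^sup>2))"
      unfolding kernel by (rule ennreal_leI)
    also have "\<dots> = 2 * (ennreal (1 / ?t ^ 2) * sq_mod w (a - b))
                    + 2 * (ennreal (1 / ?s ^ 2) * sq_mod w (a - b))"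
      unfolding sq_mod_def
      by (simp only: ennreal_plus ennreal_mult ennreal_numeral mult_nonneg_nonneg divide_nonneg_nonneg
          zero_le_power2 zero_le_numeral zero_le_one)
    finally show ?thesis unfolding tail by (simp add: add_increasing add.assoc)
  qed
qed

lemma even_diff_idx: "a \<in> idx n \<Longrightarrow> b \<in> idx n \<Longrightarrow> even (a - b)"
  unfolding idx_def mem_Collect_eq by presburger

lemma even_diff_idx_endpoint: "b \<in> idx n \<Longrightarrow> d = int n \<or> d = - int n \<Longrightarrow> even (d - b)"
  unfolding idx_def mem_Collect_eq by presburger

lemma infsum_even_reindex_le:
  fixes g :: "int \<Rightarrow> ennreal"
  assumes "\<And>b. b \<in> A \<Longrightarrow> even (c - b)"
  shows "(\<Sum>\<^sub>\<infinity>b\<in>A. g (c - b)) \<le> (\<Sum>\<^sub>\<infinity>m\<in>{m. even m}. g m)"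
    and "(\<Sum>\<^sub>\<infinity>b\<in>A. g (b - c)) \<le> (\<Sum>\<^sub>\<infinity>m\<in>{m. even m}. g m)"
  using assms by (auto intro!: infsum_reindex_le_ennreal simp: inj_on_def)

lemma sq_norm_boundary_kernel_le:
  assumes n: "n \<ge> 1" and d: "d = int n \<or> d = - int n"
  shows "sq_norm (idx n) (boundary_kernel w n d) \<le> ennreal (real R ^ 2 / real n ^ 2) * energy w + tail_energy w R"
proof -
  have "sq_norm (idx n) (boundary_kernel w n d)
      \<le> (\<Sum>\<^sub>\<infinity>b\<in>idx n. ennreal (real R ^ 2 / real n ^ 2) * sq_mod w (d - b) + sq_mod_tail w R (d - b))"
    unfolding sq_norm_def using sq_boundary_kernel_le[OF n _ d] by (intro infsum_mono) auto
  also have "\<dots> = ennreal (real R ^ 2 / real n ^ 2) * (\<Sum>\<^sub>\<infinity>b\<in>idx n. sq_mod w (d - b))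
                  + (\<Sum>\<^sub>\<infinity>b\<in>idx n. sq_mod_tail w R (d - b))"
    by (simp add: infsum_add infsum_cmult_right_ennreal)
  also have "\<dots> \<le> ennreal (real R ^ 2 / real n ^ 2) * energy w + tail_energy w R"
    unfolding energy_def tail_energy_def using even_diff_idx_endpoint[OF _ d]
    by (intro add_mono mult_left_mono infsum_even_reindex_le) auto
  finally show ?thesis .
qed

lemma infsum_weighted_row_sums_le:
  fixes u g :: "int \<Rightarrow> ennreal"
  shows "(\<Sum>\<^sub>\<infinity>a\<in>idx n. u a * (\<Sum>\<^sub>\<infinity>b\<in>idx n. g (a - b)))
         \<le> (\<Sum>\<^sub>\<infinity>a\<in>idx n. u a) * (\<Sum>\<^sub>\<infinity>m\<in>{m. even m}. g m)"
proof -
  have "(\<Sum>\<^sub>\<infinity>a\<in>idx n. u a * (\<Sum>\<^sub>\<infinity>b\<in>idx n. g (a - b)))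
        \<le> (\<Sum>\<^sub>\<infinity>a\<in>idx n. u a * (\<Sum>\<^sub>\<infinity>m\<in>{m. even m}. g m))"
  proof (rule infsum_mono)
    fix a assume "a \<in> idx n"
    then have "(\<Sum>\<^sub>\<infinity>b\<in>idx n. g (a - b)) \<le> (\<Sum>\<^sub>\<infinity>m\<in>{m. even m}. g m)"
      by (intro infsum_even_reindex_le(1)) (rule even_diff_idx)
    then show "u a * (\<Sum>\<^sub>\<infinity>b\<in>idx n. g (a - b)) \<le> u a * (\<Sum>\<^sub>\<infinity>m\<in>{m. even m}. g m)"
      by (rule mult_left_mono) simp
  qed simp_all
  then show ?thesis by (simp only: infsum_cmult_left_ennreal)
qed

lemma infsum_weighted_column_sums_le:
  fixes u g :: "int \<Rightarrow> ennreal"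
  shows "(\<Sum>\<^sub>\<infinity>a\<in>idx n. \<Sum>\<^sub>\<infinity>b\<in>idx n. u b * g (a - b))
         \<le> (\<Sum>\<^sub>\<infinity>b\<in>idx n. u b) * (\<Sum>\<^sub>\<infinity>m\<in>{m. even m}. g m)"
proof -
  have "(\<Sum>\<^sub>\<infinity>a\<in>idx n. \<Sum>\<^sub>\<infinity>b\<in>idx n. u b * g (a - b))
        = (\<Sum>\<^sub>\<infinity>b\<in>idx n. u b * (\<Sum>\<^sub>\<infinity>a\<in>idx n. g (a - b)))"
    by (subst infsum_swap_ennreal) (simp add: infsum_cmult_right_ennreal)
  also have "\<dots> \<le> (\<Sum>\<^sub>\<infinity>b\<in>idx n. u b * (\<Sum>\<^sub>\<infinity>m\<in>{m. even m}. g m))"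
  proof (rule infsum_mono)
    fix b assume "b \<in> idx n"
    then have "(\<Sum>\<^sub>\<infinity>a\<in>idx n. g (a - b)) \<le> (\<Sum>\<^sub>\<infinity>m\<in>{m. even m}. g m)"
      by (intro infsum_even_reindex_le(2)) (rule even_diff_idx)
    then show "u b * (\<Sum>\<^sub>\<infinity>a\<in>idx n. g (a - b)) \<le> u b * (\<Sum>\<^sub>\<infinity>m\<in>{m. even m}. g m)"
      by (rule mult_left_mono) simp
  qed simp_all
  finally show ?thesis by (simp only: infsum_cmult_left_ennreal)
qed

lemma hilbert_schmidt_chain_kernel_le:
  assumes n: "n \<ge> 1"
  shows "hilbert_schmidt_sq (chain_kernel w n) (idx n)
         \<le> ennreal (real R ^ 2 / real n ^ 2) * (2 * inverse_squares_sum * energy w)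
           + 6 * inverse_squares_sum * tail_energy w R"
proof -
  let ?c = "ennreal (real R ^ 2 / real n ^ 2)" and ?J = "idx n" and ?Z = inverse_squares_sum
  let ?ys = "\<lambda>a. ennreal (1 / near_factor n a ^ 2)" and ?yt = "\<lambda>b. ennreal (1 / far_factor n b ^ 2)"
  have Y: "(\<Sum>\<^sub>\<infinity>a\<in>?J. ?ys a) \<le> 2 * ?Z"
    using sq_norm_inverse_near_factor_le by (simp add: sq_norm_inverse_near_factor_eq)
  have "hilbert_schmidt_sq (chain_kernel w n) ?J
      \<le> (\<Sum>\<^sub>\<infinity>a\<in>?J. \<Sum>\<^sub>\<infinity>b\<in>?J. ?c * (?ys a * sq_mod w (a - b))
           + 2 * (?yt b * sq_mod_tail w R (a - b)) + 2 * (?ys a * sq_mod_tail w R (a - b)))"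
    unfolding hilbert_schmidt_sq_def sq_norm_def using sq_chain_kernel_le[OF n]
    by (intro infsum_mono) auto
  also have "\<dots> = ?c * (\<Sum>\<^sub>\<infinity>a\<in>?J. ?ys a * (\<Sum>\<^sub>\<infinity>b\<in>?J. sq_mod w (a - b)))
      + 2 * (\<Sum>\<^sub>\<infinity>a\<in>?J. \<Sum>\<^sub>\<infinity>b\<in>?J. ?yt b * sq_mod_tail w R (a - b))
      + 2 * (\<Sum>\<^sub>\<infinity>a\<in>?J. ?ys a * (\<Sum>\<^sub>\<infinity>b\<in>?J. sq_mod_tail w R (a - b)))"
    by (simp add: infsum_add infsum_cmult_right_ennreal)
  also have "\<dots> \<le> ?c * (2 * ?Z * energy w) + 2 * (?Z * tail_energy w R) + 2 * (2 * ?Z * tail_energy w R)"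
    unfolding energy_def tail_energy_def
    using Y infsum_inverse_far_factor_le
    by (intro add_mono mult_left_mono order.trans[OF infsum_weighted_row_sums_le]
        order.trans[OF infsum_weighted_column_sums_le] mult_right_mono) simp_all
  finally have "hilbert_schmidt_sq (chain_kernel w n) ?J
      \<le> ?c * (2 * ?Z * energy w) + (2 * (?Z * tail_energy w R) + 2 * (2 * ?Z * tail_energy w R))"
    by (simp only: add.assoc)
  also have "2 * (?Z * tail_energy w R) + 2 * (2 * ?Z * tail_energy w R) = (2 + 2 * 2) * (?Z * tail_energy w R)"
    by (simp only: distrib_right mult.assoc)
  finally show ?thesis by (simp add: mult.assoc)
qed

lemma sq_norm_inverse_near_factor_bounded:
  obtains C where "C \<ge> 1" "\<And>n. sq_norm (idx n) (inverse_near_factor n) \<le> ennreal C"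
proof -
  have "2 * inverse_squares_sum < \<infinity>"
    using inverse_squares_sum_finite by (simp add: ennreal_mult_less_top)
  then have "2 * inverse_squares_sum \<le> ennreal (enn2real (2 * inverse_squares_sum) + 1)"
    by (simp add: ennreal_enn2real ennreal_leI flip: ennreal_enn2real_if)
  then show ?thesis
    using that[of "enn2real (2 * inverse_squares_sum) + 1"] sq_norm_inverse_near_factor_le
    by (meson order_trans enn2real_nonneg le_add_same_cancel2 zero_le_one)
qed

section \<open>Decay of the kernels\<close>

context
  fixes w :: "int \<Rightarrow> complex"
  assumes w_l2: "(\<lambda>m. (cmod (w m))\<^sup>2) summable_on {m. even m}"
begin

lemma energy_finite: "energy w < \<infinity>"
  unfolding energy_def sq_mod_def by (subst infsum_ennreal_of_real[OF w_l2]) auto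

lemma tail_energy_small:
  assumes "e > 0"
  shows "\<exists>R. tail_energy w R \<le> ennreal e"
proof -
  let ?f = "\<lambda>m. (cmod (w m))\<^sup>2"
  obtain F where F: "finite F" "F \<subseteq> {m. even m}" "infsum ?f ({m. even m} - F) \<le> e"
    using summable_on_remainder_small[OF w_l2 assms] by blast
  define R where "R = nat (Max (insert 0 (abs ` F)))"
  have R: "\<bar>m\<bar> \<le> int R" if "m \<in> F" for m
    using F(1) that unfolding R_def by (simp add: Max_ge_iff)
  have "tail_energy w R \<le> (\<Sum>\<^sub>\<infinity>m\<in>{m. even m} - F. ennreal (?f m))"
    unfolding tail_energy_def by (intro infsum_mono_neutral) (auto simp: sq_mod_tail_def sq_mod_def dest: R)
  also have "\<dots> = ennreal (infsum ?f ({m. even m} - F))"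
    by (rule infsum_ennreal_of_real) (use summable_on_subset_banach[OF w_l2] in auto)
  also have "\<dots> \<le> ennreal e" using F(3) by (rule ennreal_leI)
  finally show ?thesis by blast
qed

lemma sq_norm_boundary_kernel_tendsto_0:
  shows "(\<lambda>n. sq_norm (idx n) (boundary_kernel w n (int n))) \<longlonglongrightarrow> 0"
    and "(\<lambda>n. sq_norm (idx n) (boundary_kernel w n (- int n))) \<longlonglongrightarrow> 0"
proof -
  have "(\<lambda>n. sq_norm (idx n) (boundary_kernel w n (d n))) \<longlonglongrightarrow> 0"
    if "\<And>n. d n = int n \<or> d n = - int n" for d
    by (rule ennreal_tendsto_0_by_truncation[where A = 1, OF _ energy_finite tail_energy_small])
      (use sq_norm_boundary_kernel_le that in auto)
  from this[of "\<lambda>n. int n"] this[of "\<lambda>n. - int n"] show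
    "(\<lambda>n. sq_norm (idx n) (boundary_kernel w n (int n))) \<longlonglongrightarrow> 0"
    "(\<lambda>n. sq_norm (idx n) (boundary_kernel w n (- int n))) \<longlonglongrightarrow> 0"
    by simp_all
qed

lemma hilbert_schmidt_chain_kernel_tendsto_0:
  "(\<lambda>n. hilbert_schmidt_sq (chain_kernel w n) (idx n)) \<longlonglongrightarrow> 0"
  by (rule ennreal_tendsto_0_by_truncation[OF _ _ tail_energy_small hilbert_schmidt_chain_kernel_le])
    (use inverse_squares_sum_finite energy_finite in \<open>simp_all add: ennreal_mult_less_top\<close>)

end

theorem lemma2:
  fixes w :: "int \<Rightarrow> complex"
  assumes "(\<lambda>m. (cmod (w m))\<^sup>2) summable_on {m. even m}"
  shows "\<exists>\<epsilon> :: nat \<Rightarrow> real. (\<forall>n. \<epsilon> n > 0) \<and> \<epsilon> \<longlonglongrightarrow> 0 \<and>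
           (\<forall>\<^sub>F n in sequentially. \<forall>s \<ge> 1.
              L w n s (int n) \<le> ennreal (\<epsilon> n ^ s) \<and>
              L w n s (- int n) \<le> ennreal (\<epsilon> n ^ s))"
proof -
  obtain C where C: "C \<ge> 1" "\<And>n. sq_norm (idx n) (inverse_near_factor n) \<le> ennreal C"
    using sq_norm_inverse_near_factor_bounded by blast
  let ?X = "\<lambda>d n. sq_norm (idx n) (boundary_kernel w n d)"
  let ?D = "\<lambda>n. hilbert_schmidt_sq (chain_kernel w n) (idx n)"
  have "(\<lambda>n. max (?X (int n) n) (max (?X (- int n) n) (?D n))) \<longlonglongrightarrow> 0"
    using tendsto_max[OF sq_norm_boundary_kernel_tendsto_0(1)[OF assms]
        tendsto_max[OF sq_norm_boundary_kernel_tendsto_0(2)[OF assms]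
          hilbert_schmidt_chain_kernel_tendsto_0[OF assms]]]
    by simp
  then obtain \<delta> where \<delta>: "\<And>n. \<delta> n > 0" "\<delta> \<longlonglongrightarrow> 0"
    and bounds: "\<forall>\<^sub>F n in sequentially. max (?X (int n) n) (max (?X (- int n) n) (?D n)) \<le> ennreal (\<delta> n)"
    by (rule ennreal_tendsto_0_obtains_real_majorant) blast
  show ?thesis
  proof (intro exI conjI allI)
    show "sqrt (C * \<delta> n) > 0" for n using C(1) \<delta>(1)[of n] by simp
    show "(\<lambda>n. sqrt (C * \<delta> n)) \<longlonglongrightarrow> 0"
      using tendsto_real_sqrt[OF tendsto_mult_left[OF \<delta>(2), of C]] by simp
    show "\<forall>\<^sub>F n in sequentially. \<forall>s \<ge> 1.
        L w n s (int n) \<le> ennreal (sqrt (C * \<delta> n) ^ s) \<and> L w n s (- int n) \<le> ennreal (sqrt (C * \<delta> n) ^ s)"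
      using bounds by eventually_elim (use L_le_power less_imp_le[OF \<delta>(1)] C in auto)
  qed
qed

end
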